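(* Let $n\ge 7$ be an integer and define the graph $G_n$ as follows. If $n$ is odd, $G_n$ has vertices $v_1,\dots,v_n$ and edges consisting of the cycle $v_1v_2\cdots v_{n-1}v_1$ together with the edges $v_1v_{(n+1)/2}$, $v_1v_n$, $v_{(n+1)/2}v_n$, and $v_iv_{n+1-i}$ for $i=2,3,\dots,(n-1)/2$. If $n$ is even, $G_n$ has vertices $v_1,\dots,v_n$ and edges consisting of the cycle $v_1v_2\cdots v_nv_1$ together with the edges $v_2v_{n/2}$, $v_{(n+4)/2}v_n$, and $v_iv_{n+2-i}$ for $i=2,3,\dots,n/2$. Then $G_n$ is connected of order $n$ and size $\lfloor 3n/2\rfloor+1$, and every minimum vertex cut of $G_n$ induces an edge; more precisely, for $n$ odd $\{v_1,v_{(n+1)/2}\}$ is the unique minimum vertex cut, and for $n$ even the minimum vertex cuts are exactly $\{v_2,v_n\}$ and $\{v_{n/2},v_{(n+4)/2}\}$. In particular $G_n$ has no independent minimum vertex cut.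
   Context: All graphs are finite and simple. A vertex cut of a connected graph $G$ is a set $S\subset V(G)$ such that $G-S$ is disconnected. If $G$ has connectivity $k$, a vertex cut $S$ is called minimum if $|S|=k$. A vertex cut $S$ is called an independent vertex cut if $S$ is an independent set of $G$. *)

theory Defs
  imports Main
begin

(* A finite simple graph is given by a vertex set V and an edge set E of
   2-element subsets of V. *)

definition adj :: "'a set \<Rightarrow> 'a set set \<Rightarrow> 'a \<Rightarrow> 'a \<Rightarrow> bool" where
  "adj V E u v \<longleftrightarrow> u \<in> V \<and> v \<in> V \<and> {u, v} \<in> E"

definition connected_graph :: "'a set \<Rightarrow> 'a set set \<Rightarrow> bool" where
  "connected_graph V E \<longleftrightarrow> V \<noteq> {} \<and> (\<forall>u\<in>V. \<forall>v\<in>V. (adj V E)\<^sup>*\<^sup>* u v)"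

definition disconnected_graph :: "'a set \<Rightarrow> 'a set set \<Rightarrow> bool" where
  "disconnected_graph V E \<longleftrightarrow> (\<exists>u\<in>V. \<exists>v\<in>V. \<not> (adj V E)\<^sup>*\<^sup>* u v)"

definition vertex_cut :: "'a set \<Rightarrow> 'a set set \<Rightarrow> 'a set \<Rightarrow> bool" where
  "vertex_cut V E S \<longleftrightarrow> S \<subseteq> V \<and> disconnected_graph (V - S) E"

definition connectivity :: "'a set \<Rightarrow> 'a set set \<Rightarrow> nat" where
  "connectivity V E = (LEAST k. \<exists>S. S \<subseteq> V \<and> card S = k \<and>
       (disconnected_graph (V - S) E \<or> card (V - S) \<le> 1))"

definition minimum_vertex_cut :: "'a set \<Rightarrow> 'a set set \<Rightarrow> 'a set \<Rightarrow> bool" where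
  "minimum_vertex_cut V E S \<longleftrightarrow> vertex_cut V E S \<and> card S = connectivity V E"

definition independent_set :: "'a set set \<Rightarrow> 'a set \<Rightarrow> bool" where
  "independent_set E S \<longleftrightarrow> (\<forall>u\<in>S. \<forall>v\<in>S. {u, v} \<notin> E)"

definition induces_edge :: "'a set set \<Rightarrow> 'a set \<Rightarrow> bool" where
  "induces_edge E S \<longleftrightarrow> (\<exists>u\<in>S. \<exists>v\<in>S. {u, v} \<in> E)"

(* The graph G_n, vertex v_i represented by the natural number i *)
definition Gn_vertices :: "nat \<Rightarrow> nat set" where
  "Gn_vertices n = {1..n}"

definition Gn_edges :: "nat \<Rightarrow> nat set set" where
  "Gn_edges n =
    (if odd n then
       {{i, i + 1} | i. 1 \<le> i \<and> i \<le> n - 2} \<union> {{n - 1, 1}}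
       \<union> {{1, (n + 1) div 2}, {1, n}, {(n + 1) div 2, n}}
       \<union> {{i, n + 1 - i} | i. 2 \<le> i \<and> i \<le> (n - 1) div 2}
     else
       {{i, i + 1} | i. 1 \<le> i \<and> i \<le> n - 1} \<union> {{n, 1}}
       \<union> {{2, n div 2}, {(n + 4) div 2, n}}
       \<union> {{i, n + 2 - i} | i. 2 \<le> i \<and> i \<le> n div 2})"

end

theory Submission
  imports Defs
begin

text \<open>
  Write n = 2k or n = 2k + 1. In both cases 1, 2, \<dots>, 2k, 1 is a cycle of G_n carrying the chords
  {i, 2k + 2 - i} for 2 \<le> i \<le> k. For even n there are two more chords {2, k} and {k + 2, 2k};
  for odd n there is the chord {1, k + 1} and a hub 2k + 1 adjacent exactly to 1 and k + 1.
  Deleting two cycle vertices a < b leaves an inner arc (a, b) and an outer arc, which stay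
  connected iff some edge runs between them. A case analysis on a + b produces such a chord
  unless one arc is empty or (n even) {a, b} is {2, 2k} or {k, k + 2}, which isolate 1 resp. k + 1.
  For odd n, {1, k + 1} does not cut the cycle but isolates the hub; any other pair leaves the hub
  attached.
\<close>

definition walk_connected :: "'a set \<Rightarrow> 'a set set \<Rightarrow> bool" where
  "walk_connected W E \<longleftrightarrow> (\<forall>u\<in>W. \<forall>v\<in>W. (adj W E)\<^sup>*\<^sup>* u v)"

lemma disconnected_graph_iff: "disconnected_graph W E \<longleftrightarrow> \<not> walk_connected W E"
  unfolding disconnected_graph_def walk_connected_def by blast

lemma connected_graph_iff: "connected_graph V E \<longleftrightarrow> V \<noteq> {} \<and> \<not> disconnected_graph V E"
  unfolding connected_graph_def disconnected_graph_def by blast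

lemma adj_sym: "adj W E x y \<Longrightarrow> adj W E y x"
  by (auto simp: adj_def insert_commute)

lemma reachable_sym: "(adj W E)\<^sup>*\<^sup>* x y \<Longrightarrow> (adj W E)\<^sup>*\<^sup>* y x"
  by (induction rule: rtranclp_induct) (auto dest: adj_sym intro: converse_rtranclp_into_rtranclp)

lemma reachable_mono:
  assumes "W \<subseteq> W'" "(adj W E)\<^sup>*\<^sup>* x y"
  shows "(adj W' E)\<^sup>*\<^sup>* x y"
  using assms(2) by (rule rtranclp_mono[THEN predicate2D, rotated]) (use assms(1) in \<open>auto simp: adj_def\<close>)

lemma reachable_path:
  fixes i j :: nat
  assumes "{i..j} \<subseteq> W" "\<And>k. i \<le> k \<Longrightarrow> k < j \<Longrightarrow> {k, Suc k} \<in> E"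
    and "i \<le> u" "u \<le> j" "i \<le> v" "v \<le> j"
  shows "(adj W E)\<^sup>*\<^sup>* u v"
proof -
  have path: "(adj W E)\<^sup>*\<^sup>* x y" if "i \<le> x" "x \<le> y" "y \<le> j" for x y
    using that
  proof (induction y)
    case (Suc y)
    show ?case
    proof (cases "x = Suc y")
      case False
      with Suc have "(adj W E)\<^sup>*\<^sup>* x y" by simp
      moreover have "adj W E y (Suc y)"
        using False Suc.prems assms(1,2) by (auto simp: adj_def)
      ultimately show ?thesis by (rule rtranclp.rtrancl_into_rtrancl)
    qed simp
  qed simp
  show ?thesis
    using path[of u v] path[of v u] assms(3-6) reachable_sym by (cases "u \<le> v") auto
qed

lemma walk_connected_insert:
  assumes "walk_connected W E" "y \<in> W" "{x, y} \<in> E"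
  shows "walk_connected (insert x W) E"
proof -
  have to_y: "(adj (insert x W) E)\<^sup>*\<^sup>* z y" if "z \<in> insert x W" for z
  proof (cases "z = x")
    case True
    with assms(2,3) show ?thesis by (auto simp: adj_def)
  next
    case False
    with that assms(1,2) show ?thesis
      unfolding walk_connected_def by (blast intro: reachable_mono[of W])
  qed
  show ?thesis
    unfolding walk_connected_def using to_y reachable_sym rtranclp_trans by metis
qed

lemma not_walk_connected_isolated:
  assumes "x \<in> W" "y \<in> W" "x \<noteq> y" "\<And>z. z \<in> W \<Longrightarrow> {x, z} \<notin> E"
  shows "\<not> walk_connected W E"
proof
  assume "walk_connected W E"
  with assms(1,2) have "(adj W E)\<^sup>*\<^sup>* x y" by (auto simp: walk_connected_def)
  then show False
    using assms(3,4) by (cases rule: converse_rtranclpE) (auto simp: adj_def)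
qed

lemma minimum_vertex_cuts_eqI:
  assumes V: "finite V" "k < card V"
    and cuts: "\<And>S. S \<subseteq> V \<Longrightarrow> card S \<le> k \<Longrightarrow> disconnected_graph (V - S) E \<longleftrightarrow> S \<in> C"
    and C: "C \<noteq> {}" "\<And>S. S \<in> C \<Longrightarrow> S \<subseteq> V \<and> card S = k"
  shows "{S. minimum_vertex_cut V E S} = C"
proof -
  have "connectivity V E = k"
    unfolding connectivity_def
  proof (rule Least_equality)
    from C obtain S where "S \<in> C" by blast
    with C(2) cuts have "S \<subseteq> V" "card S = k" "disconnected_graph (V - S) E"
      by auto
    then show "\<exists>S. S \<subseteq> V \<and> card S = k \<and> (disconnected_graph (V - S) E \<or> card (V - S) \<le> 1)"
      by blast
  next
    fix y
    assume "\<exists>S. S \<subseteq> V \<and> card S = y \<and> (disconnected_graph (V - S) E \<or> card (V - S) \<le> 1)"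
    then obtain S where S: "S \<subseteq> V" "card S = y" "disconnected_graph (V - S) E \<or> card (V - S) \<le> 1"
      by blast
    show "k \<le> y"
    proof (rule ccontr)
      assume "\<not> k \<le> y"
      then have "S \<notin> C" "card (V - S) = card V - y"
        using C(2) S(1,2) V(1) by (auto simp: card_Diff_subset finite_subset)
      then show False
        using cuts[OF S(1)] S(2,3) V(2) \<open>\<not> k \<le> y\<close> by linarith
    qed
  qed
  then have "minimum_vertex_cut V E S \<longleftrightarrow> S \<in> C" for S
    using cuts[of S] C(2)[of S] unfolding minimum_vertex_cut_def vertex_cut_def by auto
  then show ?thesis by blast
qed

definition chord_across :: "nat set set \<Rightarrow> nat \<Rightarrow> nat \<Rightarrow> nat \<Rightarrow> bool" where
  "chord_across E N a b \<longleftrightarrow>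
     (\<exists>p q. {p, q} \<in> E \<and> a < p \<and> p < b \<and> 1 \<le> q \<and> q \<le> N \<and> (q < a \<or> b < q))"

lemma chord_acrossI:
  "{p, q} \<in> E \<Longrightarrow> a < p \<Longrightarrow> p < b \<Longrightarrow> 1 \<le> q \<Longrightarrow> q \<le> N \<Longrightarrow> q < a \<or> b < q \<Longrightarrow> chord_across E N a b"
  unfolding chord_across_def by blast

lemma cycle_minus_two_walk_connected:
  fixes N a b :: nat
  assumes cycle: "\<And>i. 1 \<le> i \<Longrightarrow> i < N \<Longrightarrow> {i, Suc i} \<in> E" and wrap: "{N, 1} \<in> E"
    and ab: "1 \<le> a" "a \<le> b" "b \<le> N"
    and arcs_joined: "b \<le> Suc a \<or> (a = 1 \<and> b = N) \<or> chord_across E N a b"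
  shows "walk_connected ({1..N} - {a, b}) E"
proof -
  define W where "W = {1..N} - {a, b}"
  let ?R = "(adj W E)\<^sup>*\<^sup>*"
  define inner where "inner x \<longleftrightarrow> a < x \<and> x < b" for x
  define outer where "outer x \<longleftrightarrow> (b < x \<and> x \<le> N) \<or> (1 \<le> x \<and> x < a)" for x
  have inner_inner: "?R x y" if "inner x" "inner y" for x y
    by (rule reachable_path[of "Suc a" "b - 1"]) (use that ab in \<open>auto simp: W_def inner_def intro!: cycle\<close>)
  have high: "?R x y" if "b < x" "x \<le> N" "b < y" "y \<le> N" for x y
    by (rule reachable_path[of "Suc b" N]) (use that ab in \<open>auto simp: W_def intro!: cycle\<close>)
  have low: "?R x y" if "1 \<le> x" "x < a" "1 \<le> y" "y < a" for x y
    by (rule reachable_path[of 1 "a - 1"]) (use that ab in \<open>auto simp: W_def intro!: cycle\<close>)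
  have high_low: "?R x y" if "b < x" "x \<le> N" "1 \<le> y" "y < a" for x y
  proof -
    have "adj W E N 1"
      using that wrap ab by (auto simp: adj_def W_def)
    moreover have "?R x N" "?R 1 y"
      using high[of x N] low[of 1 y] that by auto
    ultimately show ?thesis
      by (meson rtranclp.rtrancl_into_rtrancl rtranclp_trans)
  qed
  have outer_outer: "?R x y" if "outer x" "outer y" for x y
    using that high low high_low reachable_sym unfolding outer_def by metis
  have inner_outer: "?R x y" if "inner x" "outer y" for x y
  proof -
    from that arcs_joined obtain p q where pq: "{p, q} \<in> E" "inner p" "outer q"
      unfolding chord_across_def inner_def outer_def by auto
    then have "adj W E p q"
      using ab unfolding adj_def W_def inner_def outer_def by auto
    then show ?thesis
      using inner_inner[OF \<open>inner x\<close> \<open>inner p\<close>] outer_outer[OF \<open>outer q\<close> \<open>outer y\<close>]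
      by (meson rtranclp.rtrancl_into_rtrancl rtranclp_trans)
  qed
  have "inner x \<or> outer x" if "x \<in> W" for x
    using that unfolding W_def inner_def outer_def by auto
  then show ?thesis
    unfolding walk_connected_def W_def[symmetric]
    using inner_inner outer_outer inner_outer reachable_sym by metis
qed

lemma card_le_2_cases:
  fixes S :: "'a :: linorder set"
  assumes "finite S" "card S \<le> 2"
  obtains "S = {}" | a b where "a \<le> b" "S = {a, b}"
proof -
  consider "card S = 0" | "card S = 1" | "card S = 2"
    using assms(2) by linarith
  then show ?thesis
  proof cases
    case 1
    with assms(1) show ?thesis using that(1) by simp
  next
    case 2
    then obtain a where "S = {a}" by (auto simp: card_1_singleton_iff)
    then show ?thesis using that(2)[of a a] by simp
  next
    case 3
    then obtain a b where "S = {a, b}" by (auto simp: card_2_iff)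
    then show ?thesis
      using that(2)[of a b] that(2)[of b a] by (cases "a \<le> b") (auto simp: insert_commute)
  qed
qed

lemma cycle_minus_walk_connected:
  fixes N :: nat
  assumes cycle: "\<And>i. 1 \<le> i \<Longrightarrow> i < N \<Longrightarrow> {i, Suc i} \<in> E" and wrap: "{N, 1} \<in> E"
    and S: "S \<subseteq> {1..N}" "card S \<le> 2"
    and chords: "\<And>a b. S = {a, b} \<Longrightarrow> Suc a < b \<Longrightarrow> \<not> (a = 1 \<and> b = N) \<Longrightarrow> chord_across E N a b"
  shows "walk_connected ({1..N} - S) E"
proof -
  have "finite S" using S(1) finite_subset by blast
  then consider "S = {}" | a b where "a \<le> b" "S = {a, b}"
    using S(2) by (rule card_le_2_cases)
  then show ?thesis
  proof cases
    case 1
    then show ?thesis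
      unfolding walk_connected_def by (auto intro!: reachable_path[of 1 N] cycle)
  next
    case (2 a b)
    have "b \<le> Suc a \<or> (a = 1 \<and> b = N) \<or> chord_across E N a b"
      using chords[OF \<open>S = {a, b}\<close>] by linarith
    moreover have "1 \<le> a" "b \<le> N"
      using 2 S(1) by auto
    ultimately show ?thesis
      using cycle_minus_two_walk_connected[OF cycle wrap] \<open>a \<le> b\<close> \<open>S = {a, b}\<close> by blast
  qed
qed

lemma chord_across_by_chords:
  fixes k a b :: nat
  assumes chords: "\<And>i. 2 \<le> i \<Longrightarrow> i \<le> k \<Longrightarrow> {i, 2*k + 2 - i} \<in> E"
    and ab: "1 \<le> a" "Suc a < b" "b \<le> 2*k" and sum: "a + b \<le> 2*k \<or> 2*k + 4 \<le> a + b"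
  shows "chord_across E (2*k) a b"
proof -
  have chord: "{i, j} \<in> E" if "2 \<le> i" "i \<le> 2*k" "i \<noteq> j" "i + j = 2*k + 2" for i j
  proof (cases "i \<le> k")
    case True
    moreover have "j = 2*k + 2 - i" using that by simp
    ultimately show ?thesis using that chords[of i] by simp
  next
    case False
    then have "2 \<le> j" "j \<le> k" "i = 2*k + 2 - j" using that by arith+
    then show ?thesis using chords[of j] by (simp add: insert_commute)
  qed
  from sum show ?thesis
  proof
    assume "a + b \<le> 2*k"
    show ?thesis
      by (rule chord_acrossI[OF chord[of "a + 1" "2*k + 1 - a"]]) (use ab \<open>a + b \<le> 2*k\<close> in arith)+
  next
    assume "2*k + 4 \<le> a + b"
    show ?thesis
      by (rule chord_acrossI[OF chord[of "b - 1" "2*k + 3 - b"]]) (use ab \<open>2*k + 4 \<le> a + b\<close> in arith)+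
  qed
qed

lemma setcompr_interval_eq_image: "{f i | i. a \<le> i \<and> i \<le> b} = f ` {a..b}"
  by auto

lemma doubleton_mem_image_iff:
  "{x, y} \<in> (\<lambda>i. {i, f i}) ` A \<longleftrightarrow> (\<exists>i\<in>A. (x = i \<and> y = f i) \<or> (x = f i \<and> y = i))"
  unfolding image_iff doubleton_eq_iff by blast

lemma Gn_edges_even:
  "Gn_edges (2*k) = insert {2*k, 1} (insert {2, k} (insert {k + 2, 2*k}
     ((\<lambda>i. {i, i + 1}) ` {1..2*k - 1} \<union> (\<lambda>i. {i, 2*k + 2 - i}) ` {2..k})))"
  by (simp add: Gn_edges_def setcompr_interval_eq_image insert_commute)

lemma Gn_edges_odd:
  "Gn_edges (2*k + 1) = insert {2*k, 1} (insert {1, k + 1} (insert {1, 2*k + 1} (insert {k + 1, 2*k + 1}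
     ((\<lambda>i. {i, i + 1}) ` {1..2*k - 1} \<union> (\<lambda>i. {i, 2*k + 2 - i}) ` {2..k}))))"
  by (simp add: Gn_edges_def setcompr_interval_eq_image insert_commute)

lemma card_path_edges: "card ((\<lambda>i::nat. {i, i + 1}) ` {1..m}) = m"
  by (subst card_image) (auto simp: inj_on_def doubleton_eq_iff)

lemma card_chords:
  fixes k :: nat
  shows "card ((\<lambda>i. {i, 2*k + 2 - i}) ` {2..k}) = k - 1"
  by (subst card_image) (auto simp: inj_on_def doubleton_eq_iff)

lemma path_edges_chords_disjoint:
  fixes k :: nat
  shows "(\<lambda>i. {i, i + 1}) ` {1..2*k - 1} \<inter> (\<lambda>i. {i, 2*k + 2 - i}) ` {2..k} = {}"
  by (auto simp: doubleton_eq_iff)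

lemma card_Gn_edges_even:
  assumes "4 \<le> k"
  shows "card (Gn_edges (2*k)) = 3*k + 1"
proof -
  let ?A = "(\<lambda>i. {i, i + 1}) ` {1..2*k - 1}" and ?B = "(\<lambda>i. {i, 2*k + 2 - i}) ` {2..k}"
  have "card (?A \<union> ?B) = 3*k - 2"
    using assms card_path_edges[of "2*k - 1"] card_chords[of k] path_edges_chords_disjoint[of k]
    by (simp add: card_Un_disjoint)
  moreover have "{2*k, 1} \<notin> ?A \<union> ?B" "{2, k} \<notin> ?A \<union> ?B" "{k + 2, 2*k} \<notin> ?A \<union> ?B"
    using assms unfolding Un_iff doubleton_mem_image_iff by auto
  ultimately show ?thesis
    using assms unfolding Gn_edges_even by (simp add: doubleton_eq_iff)
qed

lemma card_Gn_edges_odd: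
  assumes "3 \<le> k"
  shows "card (Gn_edges (2*k + 1)) = 3*k + 2"
proof -
  let ?A = "(\<lambda>i. {i, i + 1}) ` {1..2*k - 1}" and ?B = "(\<lambda>i. {i, 2*k + 2 - i}) ` {2..k}"
  have "card (?A \<union> ?B) = 3*k - 2"
    using assms card_path_edges[of "2*k - 1"] card_chords[of k] path_edges_chords_disjoint[of k]
    by (simp add: card_Un_disjoint)
  moreover have "{2*k, 1} \<notin> ?A \<union> ?B" "{1, k + 1} \<notin> ?A \<union> ?B" "{1, 2*k + 1} \<notin> ?A \<union> ?B"
      "{k + 1, 2*k + 1} \<notin> ?A \<union> ?B"
    using assms unfolding Un_iff doubleton_mem_image_iff by auto
  ultimately show ?thesis
    using assms unfolding Gn_edges_odd by (simp add: doubleton_eq_iff)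
qed

lemma Gn_edges_cycle_chords:
  assumes "n = 2*k \<or> n = 2*k + 1"
  shows "(\<lambda>i. {i, i + 1}) ` {1..2*k - 1} \<union> (\<lambda>i. {i, 2*k + 2 - i}) ` {2..k} \<union> {{2*k, 1}} \<subseteq> Gn_edges n"
  using assms by (elim disjE; simp only: Gn_edges_even Gn_edges_odd; blast)

lemma Gn_edge_cycle:
  assumes "n = 2*k \<or> n = 2*k + 1" "1 \<le> i" "i < 2*k"
  shows "{i, Suc i} \<in> Gn_edges n"
proof -
  from assms(2,3) have "{i, Suc i} \<in> (\<lambda>i. {i, i + 1}) ` {1..2*k - 1}" by auto
  with Gn_edges_cycle_chords[OF assms(1)] show ?thesis by blast
qed

lemma Gn_edge_wrap: "n = 2*k \<or> n = 2*k + 1 \<Longrightarrow> {2*k, 1} \<in> Gn_edges n"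
  using Gn_edges_cycle_chords by blast

lemma Gn_edge_chord:
  assumes "n = 2*k \<or> n = 2*k + 1" "2 \<le> i" "i \<le> k"
  shows "{i, 2*k + 2 - i} \<in> Gn_edges n"
proof -
  from assms(2,3) have "{i, 2*k + 2 - i} \<in> (\<lambda>i. {i, 2*k + 2 - i}) ` {2..k}" by auto
  with Gn_edges_cycle_chords[OF assms(1)] show ?thesis by blast
qed

lemma Gn_even_neighbours_of_1:
  "4 \<le> k \<Longrightarrow> {1, q} \<in> Gn_edges (2*k) \<Longrightarrow> q = 2 \<or> q = 2*k"
  unfolding Gn_edges_even insert_iff Un_iff doubleton_mem_image_iff by (auto simp: doubleton_eq_iff)

lemma Gn_even_neighbours_of_middle:
  "4 \<le> k \<Longrightarrow> {k + 1, q} \<in> Gn_edges (2*k) \<Longrightarrow> q = k \<or> q = k + 2"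
  unfolding Gn_edges_even insert_iff Un_iff doubleton_mem_image_iff by (auto simp: doubleton_eq_iff)

lemma Gn_odd_neighbours_of_hub:
  "3 \<le> k \<Longrightarrow> {2*k + 1, q} \<in> Gn_edges (2*k + 1) \<Longrightarrow> q = 1 \<or> q = k + 1"
  unfolding Gn_edges_odd insert_iff Un_iff doubleton_mem_image_iff by (auto simp: doubleton_eq_iff)

lemma Gn_even_chord_across:
  assumes k: "4 \<le> k" and ab: "1 \<le> a" "Suc a < b" "b \<le> 2*k"
    and not_cut: "\<not> (a = 1 \<and> b = 2*k)" "\<not> (a = 2 \<and> b = 2*k)" "\<not> (a = k \<and> b = k + 2)"
  shows "chord_across (Gn_edges (2*k)) (2*k) a b"
proof -
  consider "a + b \<le> 2*k \<or> 2*k + 4 \<le> a + b" | "2 < a" "a < k" "k < b" | "a < k + 2" "k + 2 < b" "b < 2*k"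
    using k ab not_cut by arith
  then show ?thesis
  proof cases
    case 1
    then show ?thesis
      using chord_across_by_chords[OF Gn_edge_chord ab] by blast
  next
    case 2
    have "{k, 2} \<in> Gn_edges (2*k)" by (simp add: Gn_edges_even insert_commute)
    then show ?thesis by (rule chord_acrossI) (use 2 k in arith)+
  next
    case 3
    have "{k + 2, 2*k} \<in> Gn_edges (2*k)" by (simp add: Gn_edges_even)
    then show ?thesis by (rule chord_acrossI) (use 3 k in arith)+
  qed
qed

lemma Gn_odd_chord_across:
  assumes k: "3 \<le> k" and ab: "1 \<le> a" "Suc a < b" "b \<le> 2*k" and not_ends: "\<not> (a = 1 \<and> b = 2*k)"
  shows "chord_across (Gn_edges (2*k + 1)) (2*k) a b"
proof -
  consider "a + b \<le> 2*k \<or> 2*k + 4 \<le> a + b" | "1 < a" "a < k + 1" "k + 1 < b"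
    using ab not_ends by arith
  then show ?thesis
  proof cases
    case 1
    then show ?thesis
      using chord_across_by_chords[OF Gn_edge_chord ab] by blast
  next
    case 2
    have "{k + 1, 1} \<in> Gn_edges (2*k + 1)" unfolding Gn_edges_odd by (simp add: insert_commute)
    then show ?thesis by (rule chord_acrossI) (use 2 k in arith)+
  qed
qed

lemma Gn_even_disconnected_iff:
  assumes k: "4 \<le> k" and S: "S \<subseteq> {1..2*k}" "card S \<le> 2"
  shows "disconnected_graph ({1..2*k} - S) (Gn_edges (2*k)) \<longleftrightarrow> S = {2, 2*k} \<or> S = {k, k + 2}"
proof -
  have "\<not> walk_connected ({1..2*k} - {2, 2*k}) (Gn_edges (2*k))"
    by (rule not_walk_connected_isolated[of 1 _ 3]) (use k Gn_even_neighbours_of_1 in auto)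
  moreover have "\<not> walk_connected ({1..2*k} - {k, k + 2}) (Gn_edges (2*k))"
    by (rule not_walk_connected_isolated[of "k + 1" _ 1]) (use k Gn_even_neighbours_of_middle in auto)
  moreover have "walk_connected ({1..2*k} - S) (Gn_edges (2*k))" if not_cut: "S \<noteq> {2, 2*k}" "S \<noteq> {k, k + 2}"
  proof (rule cycle_minus_walk_connected[OF Gn_edge_cycle Gn_edge_wrap S])
    fix a b
    assume "S = {a, b}" "Suc a < b" "\<not> (a = 1 \<and> b = 2*k)"
    with S(1) not_cut show "chord_across (Gn_edges (2*k)) (2*k) a b"
      by (intro Gn_even_chord_across k) auto
  qed auto
  ultimately show ?thesis
    unfolding disconnected_graph_iff by blast
qed

lemma Gn_odd_disconnected_iff:
  assumes k: "3 \<le> k" and S: "S \<subseteq> {1..2*k + 1}" "card S \<le> 2"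
  shows "disconnected_graph ({1..2*k + 1} - S) (Gn_edges (2*k + 1)) \<longleftrightarrow> S = {1, k + 1}"
proof -
  let ?E = "Gn_edges (2*k + 1)"
  have "\<not> walk_connected ({1..2*k + 1} - {1, k + 1}) ?E"
    by (rule not_walk_connected_isolated[of "2*k + 1" _ 2]) (use k Gn_odd_neighbours_of_hub in auto)
  moreover have "walk_connected ({1..2*k + 1} - S) ?E" if not_cut: "S \<noteq> {1, k + 1}"
  proof -
    define T where "T = S - {2*k + 1}"
    have T: "T \<subseteq> {1..2*k}" "card T \<le> 2"
      using S unfolding T_def by (auto intro: le_trans[OF card_Diff1_le])
    have cycle: "walk_connected ({1..2*k} - T) ?E"
    proof (rule cycle_minus_walk_connected[OF Gn_edge_cycle Gn_edge_wrap T])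
      fix a b
      assume "T = {a, b}" "Suc a < b" "\<not> (a = 1 \<and> b = 2*k)"
      with T(1) show "chord_across ?E (2*k) a b"
        by (intro Gn_odd_chord_across k) auto
    qed auto
    show ?thesis
    proof (cases "2*k + 1 \<in> S")
      case True
      then have "{1..2*k + 1} - S = {1..2*k} - T"
        unfolding T_def by (auto simp: le_Suc_eq)
      with cycle show ?thesis by simp
    next
      case False
      then have split: "{1..2*k + 1} - S = insert (2*k + 1) ({1..2*k} - T)"
        unfolding T_def by auto
      have "\<not> {1, k + 1} \<subseteq> S"
      proof
        assume sub: "{1, k + 1} \<subseteq> S"
        have "finite S" using S(1) finite_subset by blast
        moreover have "card S \<le> card {1, k + 1}" using S(2) k by simp
        ultimately show False
          using card_seteq[OF _ sub] not_cut by blast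
      qed
      then obtain h where "h \<in> {1, k + 1}" "h \<notin> S" by blast
      moreover have "{2*k + 1, h} \<in> ?E" if "h \<in> {1, k + 1}"
        using that unfolding Gn_edges_odd by (auto simp: insert_commute)
      ultimately show ?thesis
        unfolding split using k T_def by (intro walk_connected_insert[OF cycle]) auto
    qed
  qed
  ultimately show ?thesis
    unfolding disconnected_graph_iff by blast
qed

lemma Gn_even_connected: "4 \<le> k \<Longrightarrow> connected_graph {1..2*k} (Gn_edges (2*k))"
  using Gn_even_disconnected_iff[of k "{}"] by (simp add: connected_graph_iff)

lemma Gn_odd_connected: "3 \<le> k \<Longrightarrow> connected_graph {1..2*k + 1} (Gn_edges (2*k + 1))"
  using Gn_odd_disconnected_iff[of k "{}"] by (simp add: connected_graph_iff)

lemma Gn_even_minimum_vertex_cuts: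
  assumes "4 \<le> k"
  shows "{S. minimum_vertex_cut {1..2*k} (Gn_edges (2*k)) S} = {{2, 2*k}, {k, k + 2}}"
proof (rule minimum_vertex_cuts_eqI)
  fix S :: "nat set"
  assume "S \<subseteq> {1..2*k}" "card S \<le> 2"
  then show "disconnected_graph ({1..2*k} - S) (Gn_edges (2*k)) \<longleftrightarrow> S \<in> {{2, 2*k}, {k, k + 2}}"
    using Gn_even_disconnected_iff[OF assms] by simp
qed (use assms in auto)

lemma Gn_odd_minimum_vertex_cuts:
  assumes "3 \<le> k"
  shows "{S. minimum_vertex_cut {1..2*k + 1} (Gn_edges (2*k + 1)) S} = {{1, k + 1}}"
proof (rule minimum_vertex_cuts_eqI)
  fix S :: "nat set"
  assume "S \<subseteq> {1..2*k + 1}" "card S \<le> 2"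
  then show "disconnected_graph ({1..2*k + 1} - S) (Gn_edges (2*k + 1)) \<longleftrightarrow> S \<in> {{1, k + 1}}"
    using Gn_odd_disconnected_iff[OF assms] by simp
qed (use assms in auto)

theorem mainTheorem7:
  fixes n :: nat
  assumes "n \<ge> 7"
  shows "connected_graph (Gn_vertices n) (Gn_edges n)
    \<and> card (Gn_vertices n) = n
    \<and> card (Gn_edges n) = (3 * n) div 2 + 1
    \<and> (\<forall>S. minimum_vertex_cut (Gn_vertices n) (Gn_edges n) S \<longrightarrow> induces_edge (Gn_edges n) S)
    \<and> (odd n \<longrightarrow> {S. minimum_vertex_cut (Gn_vertices n) (Gn_edges n) S} = {{1, (n + 1) div 2}})
    \<and> (even n \<longrightarrow> {S. minimum_vertex_cut (Gn_vertices n) (Gn_edges n) S} = {{2, n}, {n div 2, (n + 4) div 2}})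
    \<and> \<not> (\<exists>S. minimum_vertex_cut (Gn_vertices n) (Gn_edges n) S \<and> independent_set (Gn_edges n) S)"
proof -
  let ?cuts = "{S. minimum_vertex_cut (Gn_vertices n) (Gn_edges n) S}"
  have "connected_graph (Gn_vertices n) (Gn_edges n) \<and> card (Gn_edges n) = (3 * n) div 2 + 1
      \<and> (odd n \<longrightarrow> ?cuts = {{1, (n + 1) div 2}})
      \<and> (even n \<longrightarrow> ?cuts = {{2, n}, {n div 2, (n + 4) div 2}}) \<and> ?cuts \<subseteq> Gn_edges n"
  proof (cases "even n")
    case True
    then obtain k where n: "n = 2*k" and k: "4 \<le> k" using assms by (auto elim!: evenE)
    have "{2, 2*k} \<in> Gn_edges n" "{k, k + 2} \<in> Gn_edges n"
      using Gn_edge_chord[of n k 2] Gn_edge_chord[of n k k] n k by simp_all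
    then show ?thesis
      using Gn_even_connected[OF k] card_Gn_edges_even[OF k] Gn_even_minimum_vertex_cuts[OF k] n
      by (simp add: Gn_vertices_def)
  next
    case False
    then obtain k where n: "n = 2*k + 1" and k: "3 \<le> k" using assms by (auto elim!: oddE)
    have "{1, k + 1} \<in> Gn_edges n"
      unfolding n Gn_edges_odd by simp
    then show ?thesis
      using Gn_odd_connected[OF k] card_Gn_edges_odd[OF k] Gn_odd_minimum_vertex_cuts[OF k] n
      by (simp add: Gn_vertices_def)
  qed
  moreover have "induces_edge (Gn_edges n) S" if "S \<in> ?cuts" for S
    using calculation that unfolding induces_edge_def by (cases "even n") auto
  ultimately show ?thesis
    unfolding independent_set_def induces_edge_def by (auto simp: Gn_vertices_def)
qed

end
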